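(* Fix $1\le i\le h$ and let $\hat F_i\subseteq B_i$ be such that $\hat G_i=(V(T_i),\hat F_i)$ is a forest of stars. Let $L_i$ be the set of vertices of $T_i$ that are leaves of some star of $\hat G_i$, where for a star with a single edge one of its two endpoints (arbitrarily chosen) is regarded as its leaf. Then $r(\hat F_i)\ge\sum_{v\in L_i}c_i(v_0,v)$.
   Context: $\mathsf{StackMST}(\gamma,\Delta)$: given a tree $T=(V,E(T))$ with red edge costs $c(e)\ge0$, activation costs $\gamma(e)\ge0$ for every pair $e\notin E(T)$, and a budget $\Delta$; the leader activates and prices new edges, the follower takes a minimum spanning tree breaking ties in favor of the leader, whose revenue is the total price of selected new edges. For a red (multi)graph tree with costs $c'$ and a set $F$ of added edges, define for $e\in F$: $p_F(e)=\min_H\max_{e'\in E(H)\text{ red}}c'(e')$ over all simple cycles $H$ containing $e$ in the multigraph of red edges plus $F$; $r(F)$ is the leader's revenue when activating $F$ priced by $p_F$. Root $T$ at its center $v_0$; $h$ is its height. For $1\le i\le h$, $V_i=\{v_1,\dots,v_{\ell_i}\}$ are the vertices at depth $i$, $E_i$ the edges joining them to their parents; $T_i$ is the red star centered at $v_0$ with leaves $v_1,\dots,v_{\ell_i}$ and costs $c_i(v_0,v)=c(u,v)$, $u$ the parent of $v$ in $T$; by convention $c_i(v_0,v_0)=0$. Let $\hat T_0,\dots,\hat T_{\ell_i}$ be the components of $T-E_i$, $v_0\in\hat T_0$, $v_j\in\hat T_j$; for $j\ne q$, $B_i$ contains the edge $(v_j,v_q)$ whenever some pair not in $E(T)$ joins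 $\hat T_j$ and $\hat T_q$ (edges $(v_0,v_q)$ are parallel to red edges). $r(\hat F_i)$ is computed in the auxiliary instance with red star $T_i$ and costs $c_i$. *)

theory Defs
  imports Complex_Main
begin

definition adj :: "'a set set \<Rightarrow> ('a \<times> 'a) set" where
  "adj E = {(u, v). {u, v} \<in> E}"

definition is_tree :: "'a set \<Rightarrow> 'a set set \<Rightarrow> bool" where
  "is_tree V E \<longleftrightarrow> finite V \<and> V \<noteq> {} \<and>
     E \<subseteq> {{u, v} | u v. u \<in> V \<and> v \<in> V \<and> u \<noteq> v} \<and>
     (\<forall>u\<in>V. \<forall>v\<in>V. (u, v) \<in> (adj E)\<^sup>*) \<and>
     card E = card V - 1"

definition tdist :: "'a set set \<Rightarrow> 'a \<Rightarrow> 'a \<Rightarrow> nat" where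
  "tdist E u v = (LEAST n. (u, v) \<in> (adj E) ^^ n)"

definition ecc :: "'a set \<Rightarrow> 'a set set \<Rightarrow> 'a \<Rightarrow> nat" where
  "ecc V E v = Max (tdist E v ` V)"

definition is_center :: "'a set \<Rightarrow> 'a set set \<Rightarrow> 'a \<Rightarrow> bool" where
  "is_center V E v0 \<longleftrightarrow> v0 \<in> V \<and> (\<forall>v\<in>V. ecc V E v0 \<le> ecc V E v)"

definition level :: "'a set \<Rightarrow> 'a set set \<Rightarrow> 'a \<Rightarrow> nat \<Rightarrow> 'a set" where
  "level V E v0 i = {v \<in> V. tdist E v0 v = i}"

definition level_edges :: "'a set \<Rightarrow> 'a set set \<Rightarrow> 'a \<Rightarrow> nat \<Rightarrow> 'a set set" where
  "level_edges V E v0 i =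
     {e \<in> E. \<exists>u v. e = {u, v} \<and> tdist E v0 u + 1 = i \<and> tdist E v0 v = i}"

text \<open>c_i(v0,v) = c(u,v), u the parent of v; c_i(v0,v0) = 0.\<close>
definition aux_cost :: "'a set \<Rightarrow> 'a set set \<Rightarrow> ('a set \<Rightarrow> real) \<Rightarrow> 'a \<Rightarrow> nat \<Rightarrow> 'a \<Rightarrow> real" where
  "aux_cost V E c v0 i v =
     (if v = v0 then 0 else c (THE e. e \<in> level_edges V E v0 i \<and> v \<in> e))"

definition comp :: "'a set \<Rightarrow> 'a set set \<Rightarrow> 'a \<Rightarrow> 'a set" where
  "comp V E' x = {y \<in> V. (x, y) \<in> (adj E')\<^sup>*}"

definition Bset :: "'a set \<Rightarrow> 'a set set \<Rightarrow> 'a \<Rightarrow> nat \<Rightarrow> 'a set set" where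
  "Bset V E v0 i =
     {{x, y} | x y. x \<in> insert v0 (level V E v0 i) \<and> y \<in> insert v0 (level V E v0 i) \<and> x \<noteq> y \<and>
        (\<exists>a \<in> comp V (E - level_edges V E v0 i) x. \<exists>b \<in> comp V (E - level_edges V E v0 i) y.
            a \<noteq> b \<and> {a, b} \<notin> E)}"

text \<open>Every connected component of (W, F) is a star: it has a vertex c lying on every
  edge of F that meets the component.\<close>
definition forest_of_stars :: "'a set \<Rightarrow> 'a set set \<Rightarrow> bool" where
  "forest_of_stars W F \<longleftrightarrow>
     F \<subseteq> {{u, v} | u v. u \<in> W \<and> v \<in> W \<and> u \<noteq> v} \<and>
     (\<forall>v\<in>W. \<exists>c. (v, c) \<in> (adj F)\<^sup>* \<and>
        (\<forall>e\<in>F. (\<exists>x\<in>e. (v, x) \<in> (adj F)\<^sup>*) \<longrightarrow> c \<in> e))"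

text \<open>L is an admissible leaf set: there is a choice C of star centres (each edge has exactly
  one endpoint in C, every non-centre has degree at most one); L are the non-centres of
  positive degree. For a single-edge star either endpoint may be chosen as centre/leaf.\<close>
definition leaf_choice :: "'a set \<Rightarrow> 'a set set \<Rightarrow> 'a set \<Rightarrow> bool" where
  "leaf_choice W F L \<longleftrightarrow>
     (\<exists>C \<subseteq> W. (\<forall>e\<in>F. card (e \<inter> C) = 1) \<and>
        (\<forall>v \<in> W - C. card {e \<in> F. v \<in> e} \<le> 1) \<and>
        L = {v \<in> W - C. \<exists>e\<in>F. v \<in> e})"

text \<open>Edge labels: Inl v is the red edge (v0,v); Inr e is the added (leader) edge e.
  Parallel edges are thus kept distinct.\<close>
definition aux_edges :: "'a set \<Rightarrow> 'a set set \<Rightarrow> ('a + 'a set) set" where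
  "aux_edges Lv F = Inl ` Lv \<union> Inr ` F"

definition aux_ends :: "'a \<Rightarrow> ('a + 'a set) \<Rightarrow> 'a set" where
  "aux_ends v0 x = (case x of Inl v \<Rightarrow> {v0, v} | Inr e \<Rightarrow> e)"

definition mg_adj :: "'e set \<Rightarrow> ('e \<Rightarrow> 'a set) \<Rightarrow> ('a \<times> 'a) set" where
  "mg_adj S ends = {(u, v). \<exists>x\<in>S. ends x = {u, v} \<and> u \<noteq> v}"

definition is_cycle :: "'e set \<Rightarrow> ('e \<Rightarrow> 'a set) \<Rightarrow> 'e list \<Rightarrow> 'a list \<Rightarrow> bool" where
  "is_cycle Es ends es ws \<longleftrightarrow>
     length es = length ws \<and> 2 \<le> length es \<and> distinct es \<and> distinct ws \<and> set es \<subseteq> Es \<and>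
     (\<forall>j < length es. ends (es ! j) = {ws ! j, ws ! ((j + 1) mod length es)})"

text \<open>Maximum red cost on a cycle (costs are nonnegative, so inserting 0 is harmless).\<close>
definition cycle_red_max :: "('a \<Rightarrow> real) \<Rightarrow> ('a + 'a set) list \<Rightarrow> real" where
  "cycle_red_max ci es = Max (insert 0 {ci v | v. Inl v \<in> set es})"

definition price :: "'a \<Rightarrow> 'a set \<Rightarrow> ('a \<Rightarrow> real) \<Rightarrow> 'a set set \<Rightarrow> 'a set \<Rightarrow> real" where
  "price v0 Lv ci F e =
     Min {cycle_red_max ci es | es ws. is_cycle (aux_edges Lv F) (aux_ends v0) es ws \<and> Inr e \<in> set es}"

definition aux_weight :: "'a \<Rightarrow> 'a set \<Rightarrow> ('a \<Rightarrow> real) \<Rightarrow> 'a set set \<Rightarrow> ('a + 'a set) \<Rightarrow> real" where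
  "aux_weight v0 Lv ci F x = (case x of Inl v \<Rightarrow> ci v | Inr e \<Rightarrow> price v0 Lv ci F e)"

definition mg_spanning_tree :: "'a set \<Rightarrow> 'e set \<Rightarrow> ('e \<Rightarrow> 'a set) \<Rightarrow> 'e set \<Rightarrow> bool" where
  "mg_spanning_tree W Es ends S \<longleftrightarrow>
     S \<subseteq> Es \<and> (\<forall>u\<in>W. \<forall>v\<in>W. (u, v) \<in> (mg_adj S ends)\<^sup>*) \<and> card S = card W - 1"

definition is_mst :: "'a set \<Rightarrow> 'e set \<Rightarrow> ('e \<Rightarrow> 'a set) \<Rightarrow> ('e \<Rightarrow> real) \<Rightarrow> 'e set \<Rightarrow> bool" where
  "is_mst W Es ends w S \<longleftrightarrow> mg_spanning_tree W Es ends S \<and>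
     (\<forall>S'. mg_spanning_tree W Es ends S' \<longrightarrow> sum w S \<le> sum w S')"

text \<open>r(F): the follower picks an MST, ties broken in favour of the leader, i.e. an MST
  maximising the leader's revenue (total price of selected added edges).\<close>
definition revenue :: "'a \<Rightarrow> 'a set \<Rightarrow> ('a \<Rightarrow> real) \<Rightarrow> 'a set set \<Rightarrow> real" where
  "revenue v0 Lv ci F =
     Max {(\<Sum>e \<in> {e \<in> F. Inr e \<in> S}. price v0 Lv ci F e) | S.
            is_mst (insert v0 Lv) (aux_edges Lv F) (aux_ends v0) (aux_weight v0 Lv ci F) S}"

end

theory Submission
  imports Defs
begin

text \<open>On the auxiliary instance every vertex \<open>x \<noteq> v0\<close> is assigned an edge \<open>pick x\<close>: a leaf its
  star edge, a centre essentially its red edge. The picked edges are injective in \<open>x\<close> and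
  connect everything to \<open>v0\<close>, so they form a spanning tree. Any connected spanning subgraph
  contains pairwise disjoint nonempty sets of edges, one per vertex \<open>x\<close>, none cheaper than
  \<open>pick x\<close>; hence the picked tree is a minimum spanning tree, and it contains the star edge of
  every leaf. A leaf lies on no other added edge, so every cycle through its star edge uses its
  red edge, and the price of the star edge is at least the cost of the leaf. Nonnegativity of
  the auxiliary costs rests on the uniqueness of parents in the tree.\<close>

section \<open>Connectivity and edge counts\<close>

lemma rtrancl_Un_symmetric_pair:
  assumes "(x, y) \<in> (A \<union> {(a, b), (b, a)})\<^sup>*"
  shows "(x, y) \<in> A\<^sup>* \<or> ((x, a) \<in> A\<^sup>* \<or> (x, b) \<in> A\<^sup>*) \<and> ((a, y) \<in> A\<^sup>* \<or> (b, y) \<in> A\<^sup>*)"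
  using assms
proof (induction rule: rtrancl_induct)
  case (step y z)
  then show ?case by (auto intro: rtrancl_into_rtrancl)
qed simp

lemma adj_insert_doubleton: "adj (insert {a, b} E) = adj E \<union> {(a, b), (b, a)}"
  unfolding adj_def by (auto simp: doubleton_eq_iff)

lemma adj_insert_non_doubleton: "\<nexists>a b. e = {a, b} \<Longrightarrow> adj (insert e E) = adj E"
  unfolding adj_def by auto

lemma sym_adj: "sym (adj E)"
  by (auto intro: symI simp: adj_def insert_commute)

lemma adj_rtrancl_sym: "(x, y) \<in> (adj E)\<^sup>* \<Longrightarrow> (y, x) \<in> (adj E)\<^sup>*"
  by (meson sym_adj sym_rtrancl symD)

text \<open>Removing an edge splits a reachability class into at most two, so one more root suffices.\<close>
lemma card_le_card_roots_add_card_edges: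
  assumes "finite E" "finite R" "\<forall>w\<in>W. \<exists>r\<in>R. (w, r) \<in> (adj E)\<^sup>*"
  shows "card W \<le> card R + card E"
  using assms
proof (induction E arbitrary: R rule: finite_induct)
  case empty
  then have "W \<subseteq> R" by (auto simp: adj_def)
  with empty show ?case by (simp add: card_mono)
next
  case (insert e E R)
  show ?case
  proof (cases "\<exists>a b. e = {a, b}")
    case False
    then have "card W \<le> card R + card E"
      using insert.IH[OF insert.prems(1)] insert.prems(2) by (simp add: adj_insert_non_doubleton)
    then show ?thesis using insert.hyps by simp
  next
    case True
    then obtain a b where e: "e = {a, b}" by blast
    let ?A = "adj E"
    define R' where "R' = (if \<exists>r\<in>R. (a, r) \<in> ?A\<^sup>* then insert b R
      else if \<exists>r\<in>R. (b, r) \<in> ?A\<^sup>* then insert a R else R)"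
    have "\<exists>r\<in>R'. (w, r) \<in> ?A\<^sup>*" if "w \<in> W" for w
    proof -
      obtain r where r: "r \<in> R" "(w, r) \<in> (?A \<union> {(a, b), (b, a)})\<^sup>*"
        using insert.prems(2) \<open>w \<in> W\<close> by (auto simp: e adj_insert_doubleton)
      show ?thesis
        using rtrancl_Un_symmetric_pair[OF r(2)] r(1) unfolding R'_def
        by (auto intro: rtrancl_trans)
    qed
    then have "card W \<le> card R' + card E"
      using insert.IH insert.prems(1) by (simp add: R'_def)
    moreover have "card R' \<le> card R + 1"
      using insert.prems(1) by (simp add: R'_def card_insert_if)
    ultimately show ?thesis using insert.hyps by simp
  qed
qed

lemma card_le_Suc_card_edges_if_connected:
  assumes "finite E" "w0 \<in> W" "\<forall>u\<in>W. \<forall>v\<in>W. (u, v) \<in> (adj E)\<^sup>*"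
  shows "card W \<le> Suc (card E)"
  using card_le_card_roots_add_card_edges[of E "{w0}" W] assms by auto

lemma rtrancl_adj_minus_edge:
  assumes "(x, y) \<in> (adj (E - {{x, y}}))\<^sup>*"
  shows "(adj E)\<^sup>* \<subseteq> (adj (E - {{x, y}}))\<^sup>*"
proof (rule rtrancl_subset_rtrancl, safe)
  fix u v assume "(u, v) \<in> adj E"
  then show "(u, v) \<in> (adj (E - {{x, y}}))\<^sup>*"
    using assms adj_rtrancl_sym[OF assms] by (cases "{u, v} = {x, y}") (auto simp: adj_def doubleton_eq_iff)
qed

section \<open>Rooted trees\<close>

lemma tree_edge:
  assumes "is_tree V E" "(x, y) \<in> adj E"
  shows "{x, y} \<in> E" "x \<in> V" "y \<in> V" "x \<noteq> y"
proof -
  show "{x, y} \<in> E" using assms(2) by (simp add: adj_def)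
  with assms(1) obtain u v where "{x, y} = {u, v}" "u \<in> V" "v \<in> V" "u \<noteq> v"
    unfolding is_tree_def by blast
  then show "x \<in> V" "y \<in> V" "x \<noteq> y" by (auto simp: doubleton_eq_iff)
qed

lemma tree_finite_edges:
  assumes "is_tree V E" shows "finite E"
proof -
  have "E \<subseteq> Pow V" using assms unfolding is_tree_def by blast
  then show ?thesis using assms finite_subset unfolding is_tree_def by blast
qed

lemma tree_minus_edge_not_connected:
  assumes "is_tree V E" "e \<in> E"
  shows "\<not> (\<forall>u\<in>V. \<forall>v\<in>V. (u, v) \<in> (adj (E - {e}))\<^sup>*)"
proof
  assume "\<forall>u\<in>V. \<forall>v\<in>V. (u, v) \<in> (adj (E - {e}))\<^sup>*"
  moreover obtain w0 where "w0 \<in> V" using assms(1) by (auto simp: is_tree_def)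
  ultimately have "card V \<le> Suc (card (E - {e}))"
    using tree_finite_edges[OF assms(1)] by (intro card_le_Suc_card_edges_if_connected) auto
  moreover have "card E = card V - 1" "card E \<noteq> 0"
    using assms tree_finite_edges[OF assms(1)] by (auto simp: is_tree_def)
  ultimately show False using assms(2) tree_finite_edges[OF assms(1)] by simp
qed

lemma tdist_path:
  assumes "is_tree V E" "v0 \<in> V" "x \<in> V"
  shows "(v0, x) \<in> adj E ^^ tdist E v0 x"
proof -
  have "(v0, x) \<in> (adj E)\<^sup>*" using assms by (simp add: is_tree_def)
  then obtain n where "(v0, x) \<in> adj E ^^ n" using rtrancl_power by blast
  then show ?thesis unfolding tdist_def by (rule LeastI)
qed

lemma tdist_le: "(v0, x) \<in> adj E ^^ n \<Longrightarrow> tdist E v0 x \<le> n"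
  unfolding tdist_def by (rule Least_le)

lemma tdist_self [simp]: "tdist E v0 v0 = 0"
  unfolding tdist_def by (rule Least_eq_0) simp

lemma tdist_eq_0_iff:
  assumes "is_tree V E" "v0 \<in> V" "x \<in> V"
  shows "tdist E v0 x = 0 \<longleftrightarrow> x = v0"
  using tdist_path[OF assms] by auto

lemma tdist_adj_le:
  assumes "is_tree V E" "v0 \<in> V" "(y, x) \<in> adj E"
  shows "tdist E v0 x \<le> Suc (tdist E v0 y)"
proof -
  have "(v0, y) \<in> adj E ^^ tdist E v0 y"
    using tdist_path[OF assms(1,2) tree_edge(2)[OF assms(1,3)]] .
  then have "(v0, x) \<in> adj E ^^ Suc (tdist E v0 y)" using assms(3) by auto
  then show ?thesis by (rule tdist_le)
qed

lemma tdist_parent: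
  assumes "is_tree V E" "v0 \<in> V" "x \<in> V" "tdist E v0 x = Suc n"
  obtains y where "(y, x) \<in> adj E" "tdist E v0 y = n"
proof -
  obtain y where y: "(v0, y) \<in> adj E ^^ n" "(y, x) \<in> adj E"
    using tdist_path[OF assms(1-3)] assms(4) by auto
  have "tdist E v0 y = n"
    using tdist_le[OF y(1)] tdist_adj_le[OF assms(1,2) y(2)] assms(4) by simp
  with y(2) show thesis by (rule that)
qed

lemma tree_reach_avoiding_level_edge:
  assumes T: "is_tree V E" and v0: "v0 \<in> V"
    and ab: "tdist E v0 b = i" "tdist E v0 a + 1 = i"
  shows "x \<in> V \<Longrightarrow> tdist E v0 x < i \<Longrightarrow> (v0, x) \<in> (adj (E - {{a, b}}))\<^sup>*"
proof (induction "tdist E v0 x" arbitrary: x)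
  case 0
  then show ?case using tdist_eq_0_iff[OF T v0] by simp
next
  case (Suc n)
  obtain y where y: "(y, x) \<in> adj E" "tdist E v0 y = n"
    using tdist_parent[OF T v0 Suc.prems(1) Suc.hyps(2)[symmetric]] .
  have "(v0, y) \<in> (adj (E - {{a, b}}))\<^sup>*"
    using Suc.hyps(1)[OF y(2)[symmetric] tree_edge(2)[OF T y(1)]] Suc.hyps(2) Suc.prems(2) y(2)
    by linarith
  moreover have "{y, x} \<noteq> {a, b}"
    using Suc.hyps(2) Suc.prems(2) y(2) ab by (auto simp: doubleton_eq_iff)
  then have "(y, x) \<in> adj (E - {{a, b}})" using y(1) by (simp add: adj_def)
  ultimately show ?case by simp
qed

text \<open>A second parent edge could be deleted without disconnecting the tree.\<close>
lemma tree_level_parent_unique: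
  assumes T: "is_tree V E" and v0: "v0 \<in> V"
    and u: "{u, v} \<in> E" "tdist E v0 u + 1 = i" and u': "{u', v} \<in> E" "tdist E v0 u' + 1 = i"
    and v: "tdist E v0 v = i"
  shows "u = u'"
proof (rule ccontr)
  assume "u \<noteq> u'"
  let ?E' = "E - {{u', v}}"
  have uV: "u \<in> V" "u' \<in> V" using tree_edge(2)[OF T] u(1) u'(1) by (auto simp: adj_def)
  have "(v0, u) \<in> (adj ?E')\<^sup>*" "(v0, u') \<in> (adj ?E')\<^sup>*"
    using tree_reach_avoiding_level_edge[OF T v0 v u'(2)] uV u(2) u'(2) by auto
  moreover have "(u, v) \<in> adj ?E'"
    using u(1) \<open>u \<noteq> u'\<close> by (auto simp: adj_def doubleton_eq_iff)
  ultimately have "(u', v) \<in> (adj ?E')\<^sup>*"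
    by (meson adj_rtrancl_sym rtrancl_into_rtrancl rtrancl_trans)
  then have "(adj E)\<^sup>* \<subseteq> (adj ?E')\<^sup>*" by (rule rtrancl_adj_minus_edge)
  then show False
    using tree_minus_edge_not_connected[OF T u'(1)] T by (auto simp: is_tree_def)
qed

lemma aux_cost_nonneg:
  assumes T: "is_tree V E" and v0: "v0 \<in> V" and c: "\<forall>e\<in>E. 0 \<le> c e"
    and v: "v \<in> level V E v0 i"
  shows "0 \<le> aux_cost V E c v0 i v"
proof (cases "v = v0")
  case False
  have vV: "v \<in> V" and vi: "tdist E v0 v = i" using v by (auto simp: level_def)
  then obtain k where k: "i = Suc k" using False tdist_eq_0_iff[OF T v0] by (cases i) auto
  obtain u where u: "(u, v) \<in> adj E" "tdist E v0 u = k"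
    using tdist_parent[OF T v0 vV] vi k by metis
  let ?P = "\<lambda>e. e \<in> level_edges V E v0 i \<and> v \<in> e"
  have "{u, v} \<in> E" using tree_edge(1)[OF T u(1)] .
  have "(THE e. ?P e) = {u, v}"
  proof (rule the_equality)
    show "?P {u, v}" unfolding level_edges_def using \<open>{u, v} \<in> E\<close> u(2) vi k by auto
  next
    fix e assume "?P e"
    then obtain x where "e = {x, v}" "e \<in> E" "tdist E v0 x + 1 = i"
      unfolding level_edges_def using vi by (auto simp: insert_commute)
    then show "e = {u, v}"
      using tree_level_parent_unique[OF T v0 _ _ \<open>{u, v} \<in> E\<close> _ vi] u(2) k by auto
  qed
  then show ?thesis unfolding aux_cost_def using c \<open>{u, v} \<in> E\<close> by simp
qed (simp add: aux_cost_def)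

section \<open>Cycles and connectivity in multigraphs\<close>

lemma is_cycleI:
  assumes "length es = length ws" "2 \<le> length es" "distinct es" "distinct ws" "set es \<subseteq> Es"
    and "list_all2 (\<lambda>e (u, w). ends e = {u, w}) es (zip ws (rotate1 ws))"
  shows "is_cycle Es ends es ws"
  using assms unfolding is_cycle_def list_all2_conv_all_nth by (auto simp: nth_rotate1)

lemma cycle_vertex_on_two_edges:
  assumes "is_cycle Es ends es ws" "j < length es" "u \<in> ends (es ! j)"
  obtains j' where "j' < length es" "j' \<noteq> j" "u \<in> ends (es ! j')"
proof -
  let ?n = "length es"
  have n: "2 \<le> ?n" "length ws = ?n"
    and ends: "\<And>k. k < ?n \<Longrightarrow> ends (es ! k) = {ws ! k, ws ! (Suc k mod ?n)}"
    using assms(1) by (auto simp: is_cycle_def)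
  have succ_ne: "Suc k mod ?n \<noteq> k" if "k < ?n" for k
  proof (cases "Suc k < ?n")
    case False
    then have "Suc k = ?n" using that by simp
    then show ?thesis using n(1) by auto
  qed simp
  consider "u = ws ! j" | "u = ws ! (Suc j mod ?n)" using ends[OF assms(2)] assms(3) by auto
  then show thesis
  proof cases
    case 1
    define j' where "j' = (j + ?n - 1) mod ?n"
    have "Suc (j + ?n - 1) = j + ?n" using n(1) by simp
    then have "Suc j' mod ?n = j"
      using assms(2) by (simp add: j'_def mod_Suc_eq)
    moreover have "j' < ?n" unfolding j'_def using n(1) by (intro mod_less_divisor) auto
    ultimately show thesis
      using that[of j'] ends[of j'] succ_ne[of j'] 1 by auto
  next
    case 2
    have "Suc j mod ?n < ?n" using n(1) by (intro mod_less_divisor) auto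
    then show thesis
      using that[of "Suc j mod ?n"] ends[of "Suc j mod ?n"] succ_ne[OF assms(2)] 2 by simp
  qed
qed

lemma finite_cycle_red_costs: "finite {ci v | v. Inl v \<in> set es}"
proof -
  have "{ci v | v. Inl v \<in> set es} = ci ` (Inl -` set es)" by auto
  then show ?thesis by (simp add: finite_vimageI)
qed

lemma cycle_red_max_nonneg: "0 \<le> cycle_red_max ci es"
  unfolding cycle_red_max_def by (simp add: finite_cycle_red_costs)

lemma cycle_red_max_ge: "Inl v \<in> set es \<Longrightarrow> ci v \<le> cycle_red_max ci es"
  unfolding cycle_red_max_def by (rule Max_ge) (auto simp: finite_cycle_red_costs)

lemma cycle_red_max_le:
  "0 \<le> B \<Longrightarrow> (\<And>v. Inl v \<in> set es \<Longrightarrow> ci v \<le> B) \<Longrightarrow> cycle_red_max ci es \<le> B"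
  unfolding cycle_red_max_def using finite_cycle_red_costs[of ci es] by auto

lemma mg_adjI: "y \<in> S \<Longrightarrow> ends y = {u, v} \<Longrightarrow> u \<noteq> v \<Longrightarrow> (u, v) \<in> mg_adj S ends"
  unfolding mg_adj_def by auto

lemma mg_adjE:
  assumes "(u, v) \<in> mg_adj S ends"
  obtains y where "y \<in> S" "ends y = {u, v}" "u \<noteq> v"
  using assms unfolding mg_adj_def by auto

lemma mg_adj_rtrancl_sym: "(u, v) \<in> (mg_adj S ends)\<^sup>* \<Longrightarrow> (v, u) \<in> (mg_adj S ends)\<^sup>*"
proof -
  have "sym (mg_adj S ends)" by (auto intro!: symI simp: mg_adj_def insert_commute)
  then show "(u, v) \<in> (mg_adj S ends)\<^sup>* \<Longrightarrow> (v, u) \<in> (mg_adj S ends)\<^sup>*"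
    by (meson sym_rtrancl symD)
qed

section \<open>Star forests with a choice of leaves\<close>

text \<open>The auxiliary instance of a level: the red star on \<open>v0\<close> and \<open>Lv\<close> with costs \<open>a\<close>,
  and the added star forest \<open>F\<close> whose centres \<open>C\<close> come from a leaf choice.\<close>
locale leaf_choice_instance =
  fixes v0 :: 'a and Lv :: "'a set" and a :: "'a \<Rightarrow> real" and F :: "'a set set" and C :: "'a set"
  assumes finite_Lv: "finite Lv" and root_notin: "v0 \<notin> Lv" and cost_nonneg: "\<forall>v\<in>Lv. 0 \<le> a v"
    and F_edges: "F \<subseteq> {{u, v} | u v. u \<in> insert v0 Lv \<and> v \<in> insert v0 Lv \<and> u \<noteq> v}"
    and one_center: "\<forall>e\<in>F. card (e \<inter> C) = 1"
    and leaf_degree: "\<forall>v \<in> insert v0 Lv - C. card {e\<in>F. v\<in>e} \<le> 1"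
begin

abbreviation "W \<equiv> insert v0 Lv"
abbreviation "Es \<equiv> aux_edges Lv F"
abbreviation "ends \<equiv> aux_ends v0"
abbreviation "p \<equiv> price v0 Lv a F"
abbreviation "wt \<equiv> aux_weight v0 Lv a F"

lemma finite_F: "finite F"
proof -
  have "F \<subseteq> Pow W" using F_edges by blast
  then show ?thesis using finite_Lv finite_subset by blast
qed

lemma finite_Es: "finite Es"
  unfolding aux_edges_def using finite_Lv finite_F by simp

lemma ends_simps [simp]: "ends (Inl v) = {v0, v}" "ends (Inr e) = e"
  by (simp_all add: aux_ends_def)

lemma Es_simps [simp]: "Inl v \<in> Es \<longleftrightarrow> v \<in> Lv" "Inr e \<in> Es \<longleftrightarrow> e \<in> F"
  by (auto simp: aux_edges_def)

lemma wt_simps [simp]: "wt (Inl v) = a v" "wt (Inr e) = p e"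
  by (simp_all add: aux_weight_def)

lemma Lv_neq_root: "x \<in> Lv \<Longrightarrow> x \<noteq> v0"
  using root_notin by auto

lemma F_edgeE:
  assumes "e \<in> F"
  obtains c u where "e = {c, u}" "c \<in> C" "u \<notin> C" "c \<in> W" "u \<in> W"
proof -
  obtain x y where xy: "e = {x, y}" "x \<in> W" "y \<in> W" "x \<noteq> y" using assms F_edges by blast
  have "card (e \<inter> C) = 1" using assms one_center by blast
  then have "x \<in> C \<and> y \<notin> C \<or> y \<in> C \<and> x \<notin> C"
    using xy by (cases "x \<in> C"; cases "y \<in> C") (simp_all add: card_insert_if)
  then show thesis using that xy by (auto simp: insert_commute)
qed

lemma F_subset_W: "e \<in> F \<Longrightarrow> x \<in> e \<Longrightarrow> x \<in> W"
  by (erule F_edgeE) auto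

lemma F_edge_neq: "{x, y} \<in> F \<Longrightarrow> x \<noteq> y"
  using F_edges by (auto simp: doubleton_eq_iff)

lemma F_center_unique: "e \<in> F \<Longrightarrow> x \<in> e \<Longrightarrow> y \<in> e \<Longrightarrow> x \<in> C \<Longrightarrow> y \<in> C \<Longrightarrow> x = y"
  by (erule F_edgeE) auto

lemma F_noncenter_unique: "e \<in> F \<Longrightarrow> x \<in> e \<Longrightarrow> y \<in> e \<Longrightarrow> x \<notin> C \<Longrightarrow> y \<notin> C \<Longrightarrow> x = y"
  by (erule F_edgeE) auto

lemma F_edge_at_noncenter_unique:
  assumes "u \<in> W" "u \<notin> C" "e \<in> F" "e' \<in> F" "u \<in> e" "u \<in> e'"
  shows "e = e'"
proof -
  have "card {e\<in>F. u\<in>e} \<le> 1" using leaf_degree assms(1,2) by blast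
  then show ?thesis
    using assms(3-) finite_F card_le_Suc0_iff_eq[of "{e\<in>F. u\<in>e}"] by auto
qed

lemma F_edge_at_centerE:
  assumes "e \<in> F" "c \<in> e" "c \<in> C"
  obtains u where "e = {c, u}" "u \<notin> C" "u \<in> W"
  using assms by (elim F_edgeE) auto

definition covered :: "'a \<Rightarrow> bool" where
  "covered x \<longleftrightarrow> (\<exists>e\<in>F. x \<in> e)"

definition star_leaves :: "'a \<Rightarrow> 'a set" where
  "star_leaves c = {u. {c, u} \<in> F}"

definition cheapest_leaf :: "'a \<Rightarrow> 'a" where
  "cheapest_leaf c = arg_min_on a (star_leaves c)"

definition center_of :: "'a \<Rightarrow> 'a" where
  "center_of x = (THE c. c \<in> C \<and> {c, x} \<in> F)"

lemma star_leavesD: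
  assumes "c \<in> C" "u \<in> star_leaves c"
  shows "{c, u} \<in> F" "u \<notin> C" "u \<in> W" "u \<noteq> c"
proof -
  show "{c, u} \<in> F" using assms(2) by (simp add: star_leaves_def)
  then show "u \<notin> C" "u \<in> W" "u \<noteq> c"
    using assms(1) F_center_unique[of "{c, u}" c u] F_subset_W[of "{c, u}" u] F_edge_neq by auto
qed

lemma cheapest_leaf:
  assumes "c \<in> C" "star_leaves c \<noteq> {}"
  shows "cheapest_leaf c \<in> star_leaves c" "\<And>u. u \<in> star_leaves c \<Longrightarrow> a (cheapest_leaf c) \<le> a u"
proof -
  have "finite (star_leaves c)"
    using star_leavesD(3)[OF assms(1)] finite_Lv finite_subset[of _ W] by blast
  then show "cheapest_leaf c \<in> star_leaves c" "\<And>u. u \<in> star_leaves c \<Longrightarrow> a (cheapest_leaf c) \<le> a u"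
    using assms(2) unfolding cheapest_leaf_def by (auto intro: arg_min_if_finite arg_min_least)
qed

lemma center_of_eq:
  assumes "{c, x} \<in> F" "c \<in> C" "x \<notin> C"
  shows "center_of x = c"
  unfolding center_of_def
proof (rule the_equality)
  fix c' assume c': "c' \<in> C \<and> {c', x} \<in> F"
  have "x \<in> W" using F_subset_W assms(1) by blast
  then have "{c', x} = {c, x}"
    using F_edge_at_noncenter_unique assms c' by blast
  then show "c' = c" using assms(2,3) c' by (auto simp: doubleton_eq_iff)
qed (use assms in simp)

lemma center_of:
  assumes "x \<notin> C" "covered x"
  shows "center_of x \<in> C" "{center_of x, x} \<in> F" "center_of x \<noteq> x" "center_of x \<in> W"
proof -
  obtain e where e: "e \<in> F" "x \<in> e" using assms(2) covered_def by blast
  then obtain c u where "e = {c, u}" "c \<in> C" "u \<notin> C" by (elim F_edgeE) blast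
  with e assms(1) have "{c, x} \<in> F" "c \<in> C" by auto
  then show "center_of x \<in> C" "{center_of x, x} \<in> F" "center_of x \<noteq> x" "center_of x \<in> W"
    using center_of_eq assms(1) F_subset_W by auto
qed

lemma cycle_red_F:
  "x \<in> Lv \<Longrightarrow> {v0, x} \<in> F \<Longrightarrow> is_cycle Es ends [Inl x, Inr {v0, x}] [v0, x]"
  using root_notin by (intro is_cycleI) (auto simp: insert_commute)

lemma cycle_red_F_red:
  "x \<in> Lv \<Longrightarrow> y \<in> Lv \<Longrightarrow> x \<noteq> y \<Longrightarrow> {x, y} \<in> F \<Longrightarrow>
    is_cycle Es ends [Inl x, Inr {x, y}, Inl y] [v0, x, y]"
  using root_notin by (intro is_cycleI) (auto simp: insert_commute)

lemma cycle_F_F_red: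
  "c \<in> Lv \<Longrightarrow> u \<in> Lv \<Longrightarrow> c \<noteq> u \<Longrightarrow> {v0, c} \<in> F \<Longrightarrow> {c, u} \<in> F \<Longrightarrow>
    is_cycle Es ends [Inr {v0, c}, Inr {c, u}, Inl u] [v0, c, u]"
  using root_notin by (intro is_cycleI) (auto simp: insert_commute doubleton_eq_iff)

lemma cycle_red_F_F_red:
  "x \<in> Lv \<Longrightarrow> c \<in> Lv \<Longrightarrow> u \<in> Lv \<Longrightarrow> x \<noteq> c \<Longrightarrow> c \<noteq> u \<Longrightarrow> x \<noteq> u \<Longrightarrow>
    {x, c} \<in> F \<Longrightarrow> {c, u} \<in> F \<Longrightarrow>
    is_cycle Es ends [Inl x, Inr {x, c}, Inr {c, u}, Inl u] [v0, x, c, u]"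
  using root_notin by (intro is_cycleI) (auto simp: insert_commute doubleton_eq_iff)

definition price_candidates :: "'a set \<Rightarrow> real set" where
  "price_candidates e =
     {cycle_red_max a es | es ws. is_cycle Es ends es ws \<and> Inr e \<in> set es}"

lemma price_eq_Min: "p e = Min (price_candidates e)"
  by (simp add: price_def price_candidates_def)

lemma finite_price_candidates: "finite (price_candidates e)"
proof -
  have "price_candidates e \<subseteq> cycle_red_max a ` {es. set es \<subseteq> Es \<and> distinct es}"
    unfolding price_candidates_def is_cycle_def by blast
  then show ?thesis using finite_subset_distinct[OF finite_Es] finite_subset by blast
qed

lemma price_candidates_nonempty:
  assumes "e \<in> F" shows "price_candidates e \<noteq> {}"
proof -
  obtain x y where xy: "e = {x, y}" "x \<in> W" "y \<in> W" "x \<noteq> y" using assms F_edges by blast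
  have "\<exists>es ws. is_cycle Es ends es ws \<and> Inr e \<in> set es"
  proof (cases "x = v0 \<or> y = v0")
    case True
    then obtain z where "e = {v0, z}" "z \<in> Lv" using xy by (auto simp: insert_commute)
    then show ?thesis using cycle_red_F assms by fastforce
  next
    case False
    then show ?thesis using cycle_red_F_red[of x y] xy assms by fastforce
  qed
  then show ?thesis unfolding price_candidates_def by blast
qed

lemma price_le:
  assumes "is_cycle Es ends es ws" "Inr e \<in> set es" "0 \<le> B" "\<And>v. Inl v \<in> set es \<Longrightarrow> a v \<le> B"
  shows "p e \<le> B"
proof -
  have "p e \<le> cycle_red_max a es"
    unfolding price_eq_Min using assms(1,2) finite_price_candidates
    by (intro Min_le) (auto simp: price_candidates_def)
  also have "\<dots> \<le> B" using assms(3,4) by (rule cycle_red_max_le)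
  finally show ?thesis .
qed

lemma price_nonneg: "e \<in> F \<Longrightarrow> 0 \<le> p e"
  unfolding price_eq_Min using finite_price_candidates price_candidates_nonempty
  by (auto simp: price_candidates_def cycle_red_max_nonneg)

text \<open>A leaf lies on no added edge other than its star edge, so every cycle through that edge
  leaves the leaf along its red edge.\<close>
lemma price_ge_leaf_cost:
  assumes e: "e \<in> F" and u: "u \<in> e" "u \<in> Lv" "u \<notin> C"
  shows "a u \<le> p e"
  unfolding price_eq_Min
proof (rule Min.boundedI[OF finite_price_candidates price_candidates_nonempty[OF e]])
  fix z assume "z \<in> price_candidates e"
  then obtain es ws where c: "is_cycle Es ends es ws" "Inr e \<in> set es" "z = cycle_red_max a es"
    unfolding price_candidates_def by blast
  obtain j where j: "j < length es" "es ! j = Inr e" using c(2) by (metis in_set_conv_nth)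
  obtain j' where j': "j' < length es" "j' \<noteq> j" "u \<in> ends (es ! j')"
    using cycle_vertex_on_two_edges[OF c(1) j(1)] j(2) u(1) by auto
  have "distinct es" using c(1) by (simp add: is_cycle_def)
  then have "es ! j' \<noteq> Inr e"
    using j j'(1,2) nth_eq_iff_index_eq by metis
  moreover have "es ! j' \<in> Es" using c(1) j'(1) by (auto simp: is_cycle_def)
  ultimately have "es ! j' = Inl u"
    using j'(3) u F_edge_at_noncenter_unique[of u e] e Lv_neq_root
    by (cases "es ! j'") auto
  then have "Inl u \<in> set es" using j'(1) by (metis nth_mem)
  then show "a u \<le> z" using c(3) cycle_red_max_ge by simp
qed

subsection \<open>The picked spanning tree\<close>

definition delegates :: "'a \<Rightarrow> bool" where
  "delegates c \<longleftrightarrow>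
     c \<noteq> v0 \<and> star_leaves c \<noteq> {} \<and> v0 \<notin> star_leaves c \<and> a (cheapest_leaf c) < a c"

text \<open>A centre whose cheapest leaf is cheaper than itself swaps roles with that leaf: the leaf
  contributes its red edge and the centre the star edge to it.\<close>
definition pick :: "'a \<Rightarrow> 'a + 'a set" where
  "pick x =
    (if \<not> covered x then Inl x
     else if x \<notin> C then
       (if delegates (center_of x) \<and> x = cheapest_leaf (center_of x) then Inl x
        else Inr {center_of x, x})
     else if {v0, x} \<in> F then Inr {v0, x}
     else if delegates x then Inr {x, cheapest_leaf x}
     else Inl x)"

definition picked :: "('a + 'a set) set" where
  "picked = pick ` Lv"

lemma delegatesD:
  assumes "delegates c" "c \<in> C"
  shows "cheapest_leaf c \<in> star_leaves c" "{c, cheapest_leaf c} \<in> F" "cheapest_leaf c \<in> Lv"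
    "cheapest_leaf c \<notin> C" "cheapest_leaf c \<noteq> c" "a (cheapest_leaf c) < a c"
    "{v0, c} \<notin> F" "c \<noteq> v0" "\<And>u. u \<in> star_leaves c \<Longrightarrow> a (cheapest_leaf c) \<le> a u"
proof -
  have d: "c \<noteq> v0" "star_leaves c \<noteq> {}" "v0 \<notin> star_leaves c" "a (cheapest_leaf c) < a c"
    using assms(1) by (auto simp: delegates_def)
  note l = cheapest_leaf[OF assms(2) d(2)]
  show "cheapest_leaf c \<in> star_leaves c" "a (cheapest_leaf c) < a c" "c \<noteq> v0"
    "\<And>u. u \<in> star_leaves c \<Longrightarrow> a (cheapest_leaf c) \<le> a u"
    using d l by auto
  show "{v0, c} \<notin> F" using d(3) by (simp add: star_leaves_def insert_commute)
  show "{c, cheapest_leaf c} \<in> F" "cheapest_leaf c \<notin> C" "cheapest_leaf c \<noteq> c"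
    using star_leavesD[OF assms(2) l(1)] by auto
  show "cheapest_leaf c \<in> Lv"
    using star_leavesD(3)[OF assms(2) l(1)] l(1) d(3) by auto
qed

lemma cost_le_leaf_if_not_delegates:
  assumes "\<not> delegates c" "c \<in> C" "c \<noteq> v0" "{v0, c} \<notin> F" "u \<in> star_leaves c"
  shows "a c \<le> a u"
proof -
  have "star_leaves c \<noteq> {}" "v0 \<notin> star_leaves c"
    using assms(4,5) by (auto simp: star_leaves_def insert_commute)
  then have "a c \<le> a (cheapest_leaf c)" using assms(1,3) by (auto simp: delegates_def)
  also have "\<dots> \<le> a u" using cheapest_leaf(2)[OF assms(2)] assms(5) by blast
  finally show ?thesis .
qed

lemma pick_eq_InlD: "pick x = Inl z \<Longrightarrow> z = x"
  unfolding pick_def by (auto split: if_splits)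

lemma pick_eq_InrD:
  assumes "x \<in> Lv" "pick x = Inr e"
  shows "e \<in> F" "x \<in> e"
  using assms center_of[of x] delegatesD[of x]
  unfolding pick_def by (auto split: if_splits)

lemma pick_in_Es: "x \<in> Lv \<Longrightarrow> pick x \<in> Es"
  using pick_eq_InlD pick_eq_InrD by (cases "pick x") auto

text \<open>Two vertices picking the same added edge would be its two endpoints, a leaf and its
  centre; but a centre picks a star edge only towards \<open>v0\<close> or towards a leaf that picks its red
  edge.\<close>
lemma inj_on_pick: "inj_on pick Lv"
proof (rule inj_onI)
  fix x y assume x: "x \<in> Lv" and y: "y \<in> Lv" and eq: "pick x = pick y"
  have leaf_center: False
    if u: "u \<in> Lv" "u \<notin> C" "pick u = Inr e" and v: "v \<in> Lv" "v \<in> C" "pick v = Inr e" for u v e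
  proof -
    have e: "e \<in> F" "u \<in> e" "v \<in> e" using pick_eq_InrD u v by auto
    have cu: "covered u" using e(1,2) by (auto simp: covered_def)
    have "e = {center_of u, u}" "\<not> (delegates (center_of u) \<and> u = cheapest_leaf (center_of u))"
      using u cu unfolding pick_def by (auto split: if_splits)
    moreover have "center_of u = v"
      using calculation(1) F_center_unique[OF e(1) _ e(3) _ v(2)] center_of(1)[OF u(2) cu] by auto
    moreover have "covered v" using e(1,3) by (auto simp: covered_def)
    ultimately show False
      using u v Lv_neq_root unfolding pick_def by (auto simp: doubleton_eq_iff split: if_splits)
  qed
  show "x = y"
  proof (cases "pick x")
    case (Inl z)
    then show ?thesis using pick_eq_InlD eq by metis
  next
    case (Inr e)
    then have "e \<in> F" "x \<in> e" "y \<in> e" using pick_eq_InrD x y eq by auto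
    then show ?thesis
      using F_center_unique F_noncenter_unique leaf_center[of x e y] leaf_center[of y e x] Inr eq x y
      by (cases "x \<in> C"; cases "y \<in> C") auto
  qed
qed

lemma picked_subset: "picked \<subseteq> Es"
  unfolding picked_def using pick_in_Es by auto

lemma card_picked: "card picked = card W - 1"
  unfolding picked_def using card_image[OF inj_on_pick] finite_Lv root_notin by simp

lemma picked_adjI: "x \<in> Lv \<Longrightarrow> ends (pick x) = {u, v} \<Longrightarrow> u \<noteq> v \<Longrightarrow> (u, v) \<in> mg_adj picked ends"
  unfolding picked_def by (rule mg_adjI) auto

lemma picked_reach_center:
  assumes c: "c \<in> Lv" "c \<in> C" "covered c"
  shows "(v0, c) \<in> (mg_adj picked ends)\<^sup>*"
proof -
  consider "{v0, c} \<in> F" | "{v0, c} \<notin> F" "delegates c" | "{v0, c} \<notin> F" "\<not> delegates c"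
    by blast
  then show ?thesis
  proof cases
    case 1
    then have "pick c = Inr {v0, c}" using c by (simp add: pick_def)
    then show ?thesis using picked_adjI[OF c(1)] Lv_neq_root[OF c(1)] by auto
  next
    case 2
    note l = delegatesD[OF 2(2) c(2)]
    let ?l = "cheapest_leaf c"
    have "pick c = Inr {c, ?l}" using c 2 by (simp add: pick_def)
    then have "(?l, c) \<in> mg_adj picked ends" using picked_adjI[OF c(1)] l(5) by (auto simp: insert_commute)
    moreover have "pick ?l = Inl ?l"
      using l center_of_eq[OF l(2) c(2) l(4)] 2(2) by (auto simp: pick_def covered_def)
    then have "(v0, ?l) \<in> mg_adj picked ends" using picked_adjI[OF l(3)] Lv_neq_root[OF l(3)] by auto
    ultimately show ?thesis by (meson r_into_rtrancl rtrancl_trans)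
  next
    case 3
    then have "pick c = Inl c" using c by (simp add: pick_def)
    then show ?thesis using picked_adjI[OF c(1)] Lv_neq_root[OF c(1)] by auto
  qed
qed

lemma picked_reach:
  assumes x: "x \<in> Lv" shows "(v0, x) \<in> (mg_adj picked ends)\<^sup>*"
proof (cases "pick x")
  case (Inl z)
  then show ?thesis using pick_eq_InlD[OF Inl] picked_adjI[OF x] Lv_neq_root[OF x] by auto
next
  case (Inr e)
  have cx: "covered x" using pick_eq_InrD[OF x Inr] by (auto simp: covered_def)
  show ?thesis
  proof (cases "x \<in> C")
    case True
    then show ?thesis using picked_reach_center x cx by blast
  next
    case False
    let ?c = "center_of x"
    note c = center_of[OF False cx]
    have "pick x = Inr {?c, x}" using Inr False cx by (auto simp: pick_def split: if_splits)
    then have cx_adj: "(?c, x) \<in> mg_adj picked ends" using picked_adjI[OF x] c(3) by auto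
    show ?thesis
    proof (cases "?c = v0")
      case False
      then have "?c \<in> Lv" using c(4) by simp
      moreover have "covered ?c" using c(2) by (auto simp: covered_def)
      ultimately show ?thesis
        using picked_reach_center c(1) cx_adj by (meson rtrancl_into_rtrancl)
    qed (use cx_adj in auto)
  qed
qed

lemma picked_spanning_tree: "mg_spanning_tree W Es ends picked"
  unfolding mg_spanning_tree_def
proof (intro conjI ballI picked_subset card_picked)
  fix u v assume "u \<in> W" "v \<in> W"
  then have "(u, v0) \<in> (mg_adj picked ends)\<^sup>*" "(v0, v) \<in> (mg_adj picked ends)\<^sup>*"
    using picked_reach mg_adj_rtrancl_sym[OF picked_reach] by auto
  then show "(u, v) \<in> (mg_adj picked ends)\<^sup>*" by (rule rtrancl_trans)
qed

lemma price_star_edge_le_leaf_cost: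
  assumes x: "x \<in> Lv" "x \<notin> C" "covered x"
    and not_swapped: "\<not> (delegates (center_of x) \<and> x = cheapest_leaf (center_of x))"
  shows "p {center_of x, x} \<le> a x"
proof -
  let ?c = "center_of x"
  note c = center_of[OF x(2,3)]
  have ax: "0 \<le> a x" using cost_nonneg x(1) by simp
  have x_leaf: "x \<in> star_leaves ?c" using c(2) by (simp add: star_leaves_def)
  consider "?c = v0" | "?c \<noteq> v0" "{v0, ?c} \<in> F" | "?c \<noteq> v0" "{v0, ?c} \<notin> F" "delegates ?c"
    | "?c \<noteq> v0" "{v0, ?c} \<notin> F" "\<not> delegates ?c"
    by blast
  then show ?thesis
  proof cases
    case 1
    then show ?thesis using price_le[OF cycle_red_F[OF x(1)] _ ax] c(2) by auto
  next
    case 2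
    then have "?c \<in> Lv" using c(4) by simp
    then show ?thesis using price_le[OF cycle_F_F_red[OF _ x(1) c(3) 2(2) c(2)] _ ax] by auto
  next
    case 3
    note l = delegatesD[OF 3(3) c(1)]
    have "cheapest_leaf ?c \<noteq> x" using not_swapped 3(3) by auto
    moreover have "a (cheapest_leaf ?c) \<le> a x" using l(9) x_leaf by blast
    moreover have "?c \<in> Lv" using c(4) 3(1) by simp
    ultimately have "p {x, ?c} \<le> a x"
      using price_le[OF cycle_red_F_F_red[OF x(1) _ l(3) _ l(5)[symmetric]] _ ax] c(2,3) l(2)
      by (auto simp: insert_commute)
    then show ?thesis by (simp add: insert_commute)
  next
    case 4
    have "a ?c \<le> a x" using cost_le_leaf_if_not_delegates[OF 4(3) c(1) 4(1,2) x_leaf] .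
    moreover have "?c \<in> Lv" using c(4) 4(1) by simp
    ultimately show ?thesis using price_le[OF cycle_red_F_red[OF _ x(1) c(3) c(2)] _ ax] by auto
  qed
qed

lemma wt_pick_le_cost:
  assumes x: "x \<in> Lv" shows "wt (pick x) \<le> a x"
proof -
  have ax: "0 \<le> a x" using cost_nonneg x by simp
  consider "\<not> covered x" | "covered x" "x \<notin> C" | "covered x" "x \<in> C" "{v0, x} \<in> F"
    | "covered x" "x \<in> C" "{v0, x} \<notin> F" "delegates x"
    | "covered x" "x \<in> C" "{v0, x} \<notin> F" "\<not> delegates x"
    by blast
  then show ?thesis
  proof cases
    case 2
    then show ?thesis using price_star_edge_le_leaf_cost[OF x] by (auto simp: pick_def)
  next
    case 3
    then show ?thesis using price_le[OF cycle_red_F[OF x] _ ax] by (auto simp: pick_def)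
  next
    case 4
    note l = delegatesD[OF 4(4,2)]
    have "a (cheapest_leaf x) \<le> a x" using l(6) by simp
    then have "p {x, cheapest_leaf x} \<le> a x"
      by (intro price_le[OF cycle_red_F_red[OF x l(3) l(5)[symmetric] l(2)] _ ax]) auto
    then show ?thesis using 4 by (simp add: pick_def)
  qed (auto simp: pick_def)
qed

lemma wt_pick_le_center_edge:
  assumes x: "x \<in> Lv" "x \<in> C" and u: "{x, u} \<in> F"
  shows "wt (pick x) \<le> p {x, u}"
proof (cases "u = v0")
  case True
  then show ?thesis using x u by (auto simp: pick_def covered_def insert_commute)
next
  case False
  have u_leaf: "u \<in> star_leaves x" using u by (simp add: star_leaves_def)
  note ud = star_leavesD[OF x(2) u_leaf]
  have uL: "u \<in> Lv" using ud(3) False by simp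
  have au: "0 \<le> a u" using cost_nonneg uL by simp
  have cx: "covered x" using u by (auto simp: covered_def)
  have au_le: "a u \<le> p {x, u}" using price_ge_leaf_cost[OF u _ uL ud(2)] by simp
  consider "{v0, x} \<in> F" | "{v0, x} \<notin> F" "delegates x" "u = cheapest_leaf x"
    | "{v0, x} \<notin> F" "delegates x" "u \<noteq> cheapest_leaf x" | "{v0, x} \<notin> F" "\<not> delegates x"
    by blast
  then show ?thesis
  proof cases
    case 1
    then have "p {v0, x} \<le> a u"
      using price_le[OF cycle_F_F_red[OF x(1) uL ud(4)[symmetric] 1 u] _ au] by auto
    then show ?thesis using 1 cx x au_le by (simp add: pick_def)
  next
    case 2
    then show ?thesis using cx x by (simp add: pick_def)
  next
    case 3
    note l = delegatesD[OF 3(2) x(2)]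
    have "p {cheapest_leaf x, x} \<le> a u"
      using price_le[OF cycle_red_F_F_red[OF l(3) x(1) uL l(5) ud(4)[symmetric] 3(3)[symmetric]] _ au]
        l(2,9) u_leaf u by (auto simp: insert_commute)
    then show ?thesis using 3 cx x au_le by (simp add: pick_def insert_commute)
  next
    case 4
    have "a x \<le> a u"
      using cost_le_leaf_if_not_delegates[OF 4(2) x(2) Lv_neq_root[OF x(1)] 4(1) u_leaf] .
    then show ?thesis using 4 cx x au_le by (simp add: pick_def)
  qed
qed

subsection \<open>Minimality of the picked tree\<close>

lemma edge_at_Lv_cases:
  assumes "y \<in> Es" "x \<in> Lv" "x \<in> ends y"
  shows "y = Inl x \<or> (\<exists>e. y = Inr e \<and> e \<in> F \<and> x \<in> e)"
  using assms Lv_neq_root by (cases y) auto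

text \<open>A centre is charged only star edges towards \<open>v0\<close> or towards leaves charged their red
  edge; this keeps the charges of different vertices disjoint.\<close>
definition charge :: "('a + 'a set) set \<Rightarrow> 'a \<Rightarrow> ('a + 'a set) set" where
  "charge S x =
    (if \<not> covered x then {Inl x}
     else if x \<notin> C then (if Inl x \<in> S then {Inl x} else {Inr {center_of x, x}})
     else S \<inter> insert (Inl x) {Inr {x, u} | u. {x, u} \<in> F \<and> (u = v0 \<or> Inl u \<in> S)})"

context
  fixes S assumes S_subset: "S \<subseteq> Es"
    and S_connected: "\<forall>u\<in>W. \<forall>v\<in>W. (u, v) \<in> (mg_adj S ends)\<^sup>*"
begin

lemma S_edge_at_vertex:
  assumes x: "x \<in> Lv" obtains y where "y \<in> S" "x \<in> ends y"
proof -
  have "(v0, x) \<in> (mg_adj S ends)\<^sup>*" "v0 \<noteq> x" using S_connected x Lv_neq_root by auto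
  then obtain z where "(z, x) \<in> mg_adj S ends" by (metis rtranclE)
  then show thesis using that by (auto elim: mg_adjE)
qed

text \<open>Otherwise the vertices reachable from \<open>x\<close> in \<open>S\<close> would be confined to \<open>x\<close> and its
  leaves other than \<open>v0\<close>.\<close>
lemma charge_center_nonempty:
  assumes x: "x \<in> Lv" "x \<in> C"
  shows "S \<inter> insert (Inl x) {Inr {x, u} | u. {x, u} \<in> F \<and> (u = v0 \<or> Inl u \<in> S)} \<noteq> {}"
    (is "?D \<noteq> {}")
proof
  assume empty: "?D = {}"
  define X where "X = insert x {u. {x, u} \<in> F \<and> Inr {x, u} \<in> S}"
  have closed: "v \<in> X" if uv: "(u, v) \<in> mg_adj S ends" "u \<in> X" for u v
  proof -
    obtain y where y: "y \<in> S" "ends y = {u, v}" "u \<noteq> v" using uv(1) by (elim mg_adjE)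
    show ?thesis
    proof (cases "u = x")
      case True
      then obtain e where e: "y = Inr e" "e \<in> F" "x \<in> e"
        using edge_at_Lv_cases[of y x] y S_subset x(1) empty by auto
      then obtain w where "e = {x, w}" using F_edge_at_centerE[OF _ _ x(2)] by metis
      then show ?thesis using y e True by (auto simp: X_def doubleton_eq_iff)
    next
      case False
      then have u: "{x, u} \<in> F" "Inr {x, u} \<in> S" using uv(2) by (auto simp: X_def)
      have "u \<in> star_leaves x" using u(1) by (simp add: star_leaves_def)
      note ud = star_leavesD[OF x(2) this]
      have uL: "u \<in> Lv" "Inl u \<notin> S" using u empty ud(3) by auto
      then obtain e where e: "y = Inr e" "e \<in> F" "u \<in> e"
        using edge_at_Lv_cases[of y u] y S_subset by auto
      then have "e = {x, u}" using F_edge_at_noncenter_unique ud(2,3) u(1) by blast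
      then show ?thesis using y e by (auto simp: X_def doubleton_eq_iff)
    qed
  qed
  have "(x, v0) \<in> (mg_adj S ends)\<^sup>*" using S_connected x by simp
  then have "v0 \<in> X" by (induction rule: rtrancl_induct) (simp add: X_def, blast intro: closed)
  then show False using empty x(1) Lv_neq_root by (auto simp: X_def insert_commute)
qed

lemma charge_subset:
  assumes x: "x \<in> Lv" shows "charge S x \<subseteq> S"
proof -
  obtain y where y: "y \<in> S" "x \<in> ends y" using S_edge_at_vertex[OF x] .
  then have y_cases: "y = Inl x \<or> (\<exists>e. y = Inr e \<and> e \<in> F \<and> x \<in> e)"
    using edge_at_Lv_cases S_subset x by blast
  consider "\<not> covered x" | "covered x" "x \<notin> C" | "covered x" "x \<in> C" by blast
  then show ?thesis
  proof cases
    case 1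
    then have "y = Inl x" using y_cases by (auto simp: covered_def)
    then show ?thesis using y 1 by (simp add: charge_def)
  next
    case 2
    note c = center_of[OF 2(2,1)]
    have "y = Inl x \<or> y = Inr {center_of x, x}"
      using y_cases F_edge_at_noncenter_unique[OF _ 2(2) _ c(2)] x by blast
    then show ?thesis using y 2 by (auto simp: charge_def)
  qed (auto simp: charge_def)
qed

lemma charge_nonempty: "x \<in> Lv \<Longrightarrow> charge S x \<noteq> {}"
  using charge_center_nonempty by (auto simp: charge_def)

lemma finite_charge: "finite (charge S x)"
  unfolding charge_def using finite_subset[OF S_subset finite_Es] by auto

lemma charge_InlD: "Inl z \<in> charge S x \<Longrightarrow> z = x"
  unfolding charge_def by (auto split: if_splits)

lemma charge_InrD:
  assumes "x \<in> Lv" "Inr e \<in> charge S x"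
  shows "e \<in> F" "x \<in> e" "x \<notin> C \<Longrightarrow> Inl x \<notin> S"
    "x \<in> C \<Longrightarrow> u \<in> e \<Longrightarrow> u = x \<or> u = v0 \<or> Inl u \<in> S"
  using assms center_of[of x] unfolding charge_def by (auto split: if_splits)

lemma charge_disjoint:
  assumes "x \<in> Lv" "y \<in> Lv" "x \<noteq> y" shows "charge S x \<inter> charge S y = {}"
proof (rule ccontr)
  assume "charge S x \<inter> charge S y \<noteq> {}"
  then obtain z where z: "z \<in> charge S x" "z \<in> charge S y" by blast
  show False
  proof (cases z)
    case (Inl v)
    then show False using z charge_InlD assms(3) by metis
  next
    case (Inr e)
    note ex = charge_InrD[OF assms(1) z(1)[unfolded Inr]]
      and ey = charge_InrD[OF assms(2) z(2)[unfolded Inr]]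
    consider "x \<in> C" "y \<in> C" | "x \<notin> C" "y \<notin> C" | "x \<in> C" "y \<notin> C" | "x \<notin> C" "y \<in> C"
      by blast
    then show False
    proof cases
      case 1
      then show ?thesis using F_center_unique ex(1,2) ey(2) assms(3) by blast
    next
      case 2
      then show ?thesis using F_noncenter_unique ex(1,2) ey(2) assms(3) by blast
    next
      case 3
      then show ?thesis using ex(4)[of y] ey(2,3) assms Lv_neq_root by blast
    next
      case 4
      then show ?thesis using ey(4)[of x] ex(2,3) assms Lv_neq_root by blast
    qed
  qed
qed

lemma wt_pick_le_charge:
  assumes x: "x \<in> Lv" and y: "y \<in> charge S x" shows "wt (pick x) \<le> wt y"
proof -
  consider "\<not> covered x" | "covered x" "x \<notin> C" | "covered x" "x \<in> C" by blast
  then show ?thesis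
  proof cases
    case 1
    then show ?thesis using y by (simp add: charge_def pick_def)
  next
    case 2
    have "y = Inl x \<or> y = Inr {center_of x, x}" using y 2 by (auto simp: charge_def split: if_splits)
    then have "a x \<le> wt y"
      using price_ge_leaf_cost[OF center_of(2)[OF 2(2,1)] _ x 2(2)] by auto
    then show ?thesis using wt_pick_le_cost[OF x] by simp
  next
    case 3
    then have "y = Inl x \<or> (\<exists>u. y = Inr {x, u} \<and> {x, u} \<in> F)"
      using y by (auto simp: charge_def)
    then show ?thesis using wt_pick_le_cost[OF x] wt_pick_le_center_edge[OF x 3(2)] by auto
  qed
qed

lemma sum_wt_picked_le: "sum wt picked \<le> sum wt S"
proof -
  have wt_nonneg: "0 \<le> wt y" if "y \<in> Es" for y
    using that cost_nonneg price_nonneg by (cases y) auto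
  have "sum wt picked = (\<Sum>x\<in>Lv. wt (pick x))"
    unfolding picked_def by (rule sum.reindex_cong[OF inj_on_pick]) simp_all
  also have "\<dots> \<le> (\<Sum>x\<in>Lv. sum wt (charge S x))"
  proof (rule sum_mono)
    fix x assume x: "x \<in> Lv"
    then obtain y where y: "y \<in> charge S x" using charge_nonempty by blast
    then have "wt y \<le> sum wt (charge S x)"
      using finite_charge charge_subset[OF x] S_subset wt_nonneg by (intro member_le_sum) auto
    then show "wt (pick x) \<le> sum wt (charge S x)" using wt_pick_le_charge[OF x y] by simp
  qed
  also have "\<dots> = sum wt (\<Union>x\<in>Lv. charge S x)"
    using charge_disjoint finite_Lv finite_charge by (intro sum.UNION_disjoint[symmetric]) auto
  also have "\<dots> \<le> sum wt S"
    using charge_subset S_subset wt_nonneg finite_subset[OF S_subset finite_Es]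
    by (intro sum_mono2) auto
  finally show ?thesis .
qed

end

lemma picked_mst: "is_mst W Es ends wt picked"
  unfolding is_mst_def
proof (intro conjI allI impI picked_spanning_tree)
  fix S assume "mg_spanning_tree W Es ends S"
  then show "sum wt picked \<le> sum wt S"
    unfolding mg_spanning_tree_def by (intro sum_wt_picked_le) auto
qed

lemma star_edge_picked:
  assumes u: "u \<in> Lv" "u \<notin> C" "covered u"
  shows "Inr {center_of u, u} \<in> picked"
proof (cases "delegates (center_of u) \<and> u = cheapest_leaf (center_of u)")
  case False
  then have "pick u = Inr {center_of u, u}" using u by (simp add: pick_def)
  then show ?thesis unfolding picked_def using u(1) by (metis image_eqI)
next
  case True
  let ?c = "center_of u"
  note c = center_of[OF u(2,3)]
  note l = delegatesD[OF conjunct1[OF True] c(1)]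
  have "?c \<in> Lv" using c(4) l(8) by simp
  moreover have "pick ?c = Inr {?c, u}"
    using c l True by (auto simp: pick_def covered_def)
  ultimately show ?thesis unfolding picked_def by (metis image_eqI)
qed

definition leader_revenue :: "('a + 'a set) set \<Rightarrow> real" where
  "leader_revenue S = (\<Sum>e \<in> {e \<in> F. Inr e \<in> S}. p e)"

lemma leader_revenue_le_revenue:
  assumes "is_mst W Es ends wt S" shows "leader_revenue S \<le> revenue v0 Lv a F"
proof -
  let ?R = "{leader_revenue S | S. is_mst W Es ends wt S}"
  have "?R \<subseteq> leader_revenue ` Pow Es" unfolding is_mst_def mg_spanning_tree_def by blast
  then have "finite ?R" using finite_Es finite_subset by blast
  moreover have "leader_revenue S \<in> ?R" using assms by blast
  ultimately have "leader_revenue S \<le> Max ?R" by (rule Max_ge)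
  then show ?thesis unfolding revenue_def leader_revenue_def by simp
qed

theorem sum_leaf_costs_le_revenue:
  assumes root_cost: "a v0 = 0"
  shows "(\<Sum>v\<in>{v \<in> W - C. \<exists>e\<in>F. v \<in> e}. a v) \<le> revenue v0 Lv a F"
proof -
  let ?L = "{v \<in> W - C. \<exists>e\<in>F. v \<in> e} - {v0}"
  let ?star_edge = "\<lambda>v. {center_of v, v}"
  have L: "u \<in> Lv" "u \<notin> C" "covered u" if "u \<in> ?L" for u
    using that by (auto simp: covered_def)
  have "(\<Sum>v\<in>{v \<in> W - C. \<exists>e\<in>F. v \<in> e}. a v) = (\<Sum>v\<in>?L. a v)"
    using finite_Lv root_cost by (intro sum.mono_neutral_right) auto
  also have "\<dots> \<le> (\<Sum>v\<in>?L. p (?star_edge v))"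
  proof (rule sum_mono)
    fix v assume "v \<in> ?L"
    note v = L[OF this]
    show "a v \<le> p (?star_edge v)" using price_ge_leaf_cost[OF center_of(2)[OF v(2,3)] _ v(1,2)] by simp
  qed
  also have "\<dots> = (\<Sum>e\<in>?star_edge ` ?L. p e)"
  proof -
    have "inj_on ?star_edge ?L"
    proof (rule inj_onI)
      fix u v assume u: "u \<in> ?L" and v: "v \<in> ?L" and eq: "?star_edge u = ?star_edge v"
      have "v \<in> ?star_edge u" using eq by simp
      then show "u = v"
        using F_noncenter_unique[OF center_of(2)[OF L(2,3)[OF u]] _ _ L(2)[OF u] L(2)[OF v]]
        by blast
    qed
    then show ?thesis by (simp add: sum.reindex)
  qed
  also have "\<dots> \<le> leader_revenue picked"
    unfolding leader_revenue_def
  proof (rule sum_mono2)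
    show "?star_edge ` ?L \<subseteq> {e \<in> F. Inr e \<in> picked}"
      using L star_edge_picked center_of(2) by blast
  qed (use finite_F price_nonneg in auto)
  also have "\<dots> \<le> revenue v0 Lv a F" by (rule leader_revenue_le_revenue[OF picked_mst])
  finally show ?thesis .
qed

end

text \<open>The star structure needed is already part of \<open>leaf_choice\<close>.\<close>
theorem lemma8:
  fixes V :: "'a set" and E :: "'a set set" and c :: "'a set \<Rightarrow> real"
    and v0 :: 'a and i :: nat and F :: "'a set set" and L :: "'a set"
  assumes tree: "is_tree V E"
    and cost_nonneg: "\<forall>e\<in>E. 0 \<le> c e"
    and center: "is_center V E v0"
    and i_lo: "1 \<le> i" and i_hi: "i \<le> ecc V E v0"
    and F_sub: "F \<subseteq> Bset V E v0 i"
    and stars: "forest_of_stars (insert v0 (level V E v0 i)) F"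
    and leaves: "leaf_choice (insert v0 (level V E v0 i)) F L"
  shows "revenue v0 (level V E v0 i) (aux_cost V E c v0 i) F
           \<ge> (\<Sum>v\<in>L. aux_cost V E c v0 i v)"
proof -
  let ?Lv = "level V E v0 i"
  have v0: "v0 \<in> V" using center by (simp add: is_center_def)
  obtain C where C: "\<forall>e\<in>F. card (e \<inter> C) = 1" "\<forall>v \<in> insert v0 ?Lv - C. card {e\<in>F. v\<in>e} \<le> 1"
    "L = {v \<in> insert v0 ?Lv - C. \<exists>e\<in>F. v \<in> e}"
    using leaves unfolding leaf_choice_def by blast
  interpret leaf_choice_instance v0 ?Lv "aux_cost V E c v0 i" F C
  proof
    show "finite ?Lv" using tree by (simp add: is_tree_def level_def)
    show "v0 \<notin> ?Lv" using i_lo by (simp add: level_def)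
    show "\<forall>v\<in>?Lv. 0 \<le> aux_cost V E c v0 i v" using aux_cost_nonneg[OF tree v0 cost_nonneg] by blast
    show "F \<subseteq> {{u, v} | u v. u \<in> insert v0 ?Lv \<and> v \<in> insert v0 ?Lv \<and> u \<noteq> v}"
      using F_sub unfolding Bset_def by blast
  qed (use C in auto)
  have "aux_cost V E c v0 i v0 = 0" by (simp add: aux_cost_def)
  then show ?thesis using sum_leaf_costs_le_revenue C(3) by simp
qed

end
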